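(* Let $(n_k)_{k\in\mathbb{N}}$ and $(m_k)_{k\in\mathbb{N}}$ be two sequences of positive integers with $m_k \geq n_k/2$ for every $k\in\mathbb{N}$. Let $Q\in\mathbb{R}[x]$ be a polynomial. Let $\{f_k:\mathbb{Z}_{n_k}\to\mathbb{C}\}_{k\in\mathbb{N}}$ be a concentrated family of functions such that $\|f_k\|_2^2\leq Q(\log(n_k))$ for all $k\in\mathbb{N}$. Then the family $\{\widetilde{f_k}:\mathbb{Z}_{m_k}\to\mathbb{C}\}_{k\in\mathbb{N}}$ is concentrated.
   Context: $\mathbb{Z}_n=\{0,1,\dots,n-1\}$ with addition mod $n$. For $f,g:\mathbb{Z}_n\to\mathbb{C}$, $\langle f,g\rangle=\frac1n\sum_{x\in\mathbb{Z}_n}f(x)\overline{g(x)}$ and $\|f\|_2^2=\langle f,f\rangle$. For $\alpha\in\mathbb{Z}_n$, $\chi_\alpha(x)=\chi_{\alpha,n}(x)=\exp(2\pi i\alpha x/n)$ and $\widehat f(\alpha)=\langle f,\chi_\alpha\rangle$, so $f=\sum_{\alpha}\widehat f(\alpha)\chi_\alpha$. For $\Gamma\subseteq\mathbb{Z}_n$, $f|_\Gamma:\mathbb{Z}_n\to\mathbb{C}$ denotes the projection $f|_\Gamma(x)=\sum_{\alpha\in\Gamma}\widehat f(\alpha)\chi_\alpha(x)$. For $f:\mathbb{Z}_n\to\mathbb{C}$ and $m\in\mathbb{N}$, $\widetilde f:\mathbb{Z}_m\to\mathbb{C}$ is defined by $\widetilde f(x)=f(x)$ for $0\le x<\min(n,m)$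 and $\widetilde f(x)=0$ otherwise. A family $\{f_k:\mathbb{Z}_{n_k}\to\mathbb{C}\}_{k\in\mathbb{N}}$ (with $n_k$ positive integers) is concentrated if there is a bivariate polynomial $P\in\mathbb{R}[x,y]$ such that for all $k\in\mathbb{N}$ and all $\epsilon>0$ there is a set $\Gamma_k\subseteq\mathbb{Z}_{n_k}$ with $|\Gamma_k|\le P(\log(n_k),1/\epsilon)$ and $\|f_k-f_k|_{\Gamma_k}\|_2^2<\epsilon$. *)

theory Defs
  imports Complex_Main "HOL-Computational_Algebra.Polynomial"
begin

text \<open>A function Z_n -> C is represented as f :: nat => complex; only the values
  at 0,...,n-1 are ever used.\<close>

definition zn_inner :: "nat \<Rightarrow> (nat \<Rightarrow> complex) \<Rightarrow> (nat \<Rightarrow> complex) \<Rightarrow> complex" where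
  "zn_inner n f g = (1 / of_nat n) * (\<Sum>x<n. f x * cnj (g x))"

definition zn_norm2sq :: "nat \<Rightarrow> (nat \<Rightarrow> complex) \<Rightarrow> real" where
  "zn_norm2sq n f = Re (zn_inner n f f)"

definition zn_char :: "nat \<Rightarrow> nat \<Rightarrow> nat \<Rightarrow> complex" where
  "zn_char n \<alpha> x = exp (2 * of_real pi * \<i> * of_nat \<alpha> * of_nat x / of_nat n)"

definition zn_fourier :: "nat \<Rightarrow> (nat \<Rightarrow> complex) \<Rightarrow> nat \<Rightarrow> complex" where
  "zn_fourier n f \<alpha> = zn_inner n f (zn_char n \<alpha>)"

definition zn_proj :: "nat \<Rightarrow> (nat \<Rightarrow> complex) \<Rightarrow> nat set \<Rightarrow> nat \<Rightarrow> complex" where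
  "zn_proj n f \<Gamma> = (\<lambda>x. \<Sum>\<alpha>\<in>\<Gamma>. zn_fourier n f \<alpha> * zn_char n \<alpha> x)"

definition zn_tilde :: "nat \<Rightarrow> nat \<Rightarrow> (nat \<Rightarrow> complex) \<Rightarrow> nat \<Rightarrow> complex" where
  "zn_tilde n m f = (\<lambda>x. if x < min n m then f x else 0)"

definition bipoly_eval :: "nat \<Rightarrow> (nat \<Rightarrow> nat \<Rightarrow> real) \<Rightarrow> real \<Rightarrow> real \<Rightarrow> real" where
  "bipoly_eval d c x y = (\<Sum>i\<le>d. \<Sum>j\<le>d. c i j * x ^ i * y ^ j)"

definition concentrated :: "(nat \<Rightarrow> nat) \<Rightarrow> (nat \<Rightarrow> nat \<Rightarrow> complex) \<Rightarrow> bool" where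
  "concentrated n f \<longleftrightarrow>
     (\<exists>d c. \<forall>k. \<forall>\<epsilon>>0. \<exists>\<Gamma>. \<Gamma> \<subseteq> {..<n k} \<and>
        real (card \<Gamma>) \<le> bipoly_eval d c (ln (real (n k))) (1 / \<epsilon>) \<and>
        zn_norm2sq (n k) (\<lambda>x. f k x - zn_proj (n k) (f k) \<Gamma> x) < \<epsilon>)"

end

theory Submission
  imports Defs "HOL-Analysis.Analysis"
begin

(* Split f = (f - f|Gamma) + sum over a in Gamma of f^(a) chi_a and truncate everything to Z_m.
   Truncation does not increase the sum of squares, and n <= 2m, so the first part keeps at
   most twice its L2 error.  The truncation of one character chi_a is a geometric progression:
   its b-th Fourier coefficient on Z_m is at most 2 / (3 (|j| - 1/2)) in modulus, where j is the
   cyclic offset of b from the frequency m a / n.  Outside the 2W + 1 frequencies nearest to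
   m a / n its squared coefficients therefore sum to at most sum_{r > W} 1 / (r (r - 1)) = 1 / W.
   Let Lambda be the union of these windows over a in Gamma.  By Cauchy-Schwarz and
   |f^(a)|^2 <= ||f||^2 the error of tilde f outside Lambda is at most
   4 ||f - f|Gamma||^2 + 2 |Gamma|^2 ||f||^2 / W, which is below eps for W of order
   |Gamma|^2 ||f||^2 / eps, while |Lambda| <= |Gamma| (2W + 1).  As |Gamma| and ||f||^2 are
   polynomial in log n <= 1 + log m and 1/eps, so is |Lambda|. *)

lemma eq_of_dvd_diff_less:
  fixes x y :: int
  assumes "m dvd x - y" "\<bar>x - y\<bar> < m"
  shows "x = y"
  using dvd_imp_le_int[of "x - y" m] assms by (cases "x = y") auto

lemma norm_sum_sq_le:
  fixes u :: "'a \<Rightarrow> 'b::real_normed_vector"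
  shows "(norm (\<Sum>a\<in>A. u a))\<^sup>2 \<le> real (card A) * (\<Sum>a\<in>A. (norm (u a))\<^sup>2)"
proof -
  have "(norm (\<Sum>a\<in>A. u a))\<^sup>2 \<le> (\<Sum>a\<in>A. norm (u a))\<^sup>2"
    by (intro power_mono norm_sum) simp
  also have "\<dots> \<le> real (card A) * (\<Sum>a\<in>A. (norm (u a))\<^sup>2)"
    using sum_squared_le_sum_of_squares[of "\<lambda>a. norm (u a)" A] by (simp add: mult.commute)
  finally show ?thesis .
qed

lemma norm_add_sq_le:
  fixes x y :: "'a::real_normed_vector"
  shows "(norm (x + y))\<^sup>2 \<le> 2 * (norm x)\<^sup>2 + 2 * (norm y)\<^sup>2"
proof -
  have "(norm (x + y))\<^sup>2 \<le> (norm x + norm y)\<^sup>2"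
    by (intro power_mono norm_triangle_ineq) simp
  also have "\<dots> \<le> 2 * (norm x)\<^sup>2 + 2 * (norm y)\<^sup>2"
    using sum_squares_ge_zero[of "norm x - norm y" 0] by (simp add: power2_eq_square algebra_simps)
  finally show ?thesis .
qed

section \<open>Fourier analysis on cyclic groups\<close>

lemma zn_norm2sq_eq: "zn_norm2sq M g = (\<Sum>x<M. (cmod (g x))\<^sup>2) / real M"
proof -
  have "zn_inner M g g = (\<Sum>x<M. complex_of_real ((cmod (g x))\<^sup>2)) / of_nat M"
    unfolding zn_inner_def by (simp only: complex_norm_square) simp
  also have "\<dots> = complex_of_real ((\<Sum>x<M. (cmod (g x))\<^sup>2) / real M)"
    by simp
  finally show ?thesis
    unfolding zn_norm2sq_def by simp
qed

lemma zn_norm2sq_nonneg: "zn_norm2sq M g \<ge> 0"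
  unfolding zn_norm2sq_eq by (simp add: sum_nonneg)

lemma zn_fourier_eq: "zn_fourier M g b = (\<Sum>x<M. g x * cnj (zn_char M b x)) / of_nat M"
  unfolding zn_fourier_def zn_inner_def by simp

lemma zn_char_mult_cnj:
  assumes "N > 0" "M > 0"
  shows "zn_char N a x * cnj (zn_char M b x) = cis (2 * pi * (real a / real N - real b / real M)) ^ x"
proof -
  have "zn_char N a x = cis (2 * pi * real a * real x / real N)"
    "zn_char M b x = cis (2 * pi * real b * real x / real M)"
    unfolding zn_char_def cis_conv_exp by (simp_all add: mult_ac)
  then have "zn_char N a x * cnj (zn_char M b x)
      = cis (real x * (2 * pi * (real a / real N - real b / real M)))"
    by (simp add: cis_cnj cis_mult algebra_simps)
  then show ?thesis
    by (simp only: Complex.DeMoivre)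
qed

lemma zn_char_orthogonal:
  assumes "a < M" "b < M"
  shows "(\<Sum>x<M. zn_char M a x * cnj (zn_char M b x)) = (if a = b then of_nat M else 0)"
proof (cases "a = b")
  case True
  then show ?thesis
    using assms by (simp add: zn_char_mult_cnj)
next
  case False
  have M: "M > 0" using assms by simp
  define w where "w = cis (2 * pi * (real a / real M - real b / real M))"
  have w_eq: "w = cis (2 * pi * real_of_int (int a - int b) / real M)"
    unfolding w_def using M by (intro arg_cong[where f = cis]) (simp add: field_simps)
  have "w \<noteq> 1"
  proof
    assume "w = 1"
    then obtain k :: int where "2 * pi * real_of_int (int a - int b) / real M = of_int k * 2 * pi"
      unfolding w_eq by (auto simp: complex_eq_iff cos_one_2pi_int)
    then have "2 * pi * real_of_int (int a - int b) = 2 * pi * real_of_int (k * int M)"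
      using M by (simp add: field_simps)
    then have "real_of_int (int a - int b) = real_of_int (k * int M)"
      by simp
    then have "int M dvd int a - int b"
      by (simp only: of_int_eq_iff) simp
    moreover have "\<bar>int a - int b\<bar> < int M"
      using assms by simp
    ultimately have "int a = int b"
      by (rule eq_of_dvd_diff_less)
    then show False
      using False by simp
  qed
  moreover have "w ^ M = 1"
    unfolding w_eq Complex.DeMoivre using M by simp
  ultimately show ?thesis
    using False M by (simp add: zn_char_mult_cnj geometric_sum flip: w_def)
qed

lemma zn_char_commute: "zn_char M a x = zn_char M x a"
  unfolding zn_char_def by (simp add: mult_ac)

lemma zn_parseval:
  assumes "M > 0"
  shows "zn_norm2sq M g = (\<Sum>b<M. (cmod (zn_fourier M g b))\<^sup>2)"
proof -
  let ?c = "zn_char M"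
  let ?k = "1 / (of_nat M)\<^sup>2 :: complex"
  have "complex_of_real (\<Sum>b<M. (cmod (zn_fourier M g b))\<^sup>2)
      = (\<Sum>b<M. zn_fourier M g b * cnj (zn_fourier M g b))"
    by (simp only: of_real_sum complex_norm_square)
  also have "\<dots> = (\<Sum>b<M. \<Sum>x<M. \<Sum>y<M. ?k * (g x * cnj (g y)) * (?c y b * cnj (?c x b)))"
    by (simp add: zn_fourier_eq sum_product sum_divide_distrib zn_char_commute power2_eq_square
        field_simps)
  also have "\<dots> = (\<Sum>x<M. \<Sum>b<M. \<Sum>y<M. ?k * (g x * cnj (g y)) * (?c y b * cnj (?c x b)))"
    by (rule sum.swap)
  also have "\<dots> = (\<Sum>x<M. \<Sum>y<M. \<Sum>b<M. ?k * (g x * cnj (g y)) * (?c y b * cnj (?c x b)))"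
    by (rule sum.cong[OF refl]) (rule sum.swap)
  also have "\<dots> = (\<Sum>x<M. \<Sum>y<M. ?k * (g x * cnj (g y)) * (\<Sum>b<M. ?c y b * cnj (?c x b)))"
    by (simp only: sum_distrib_left)
  also have "\<dots> = (\<Sum>x<M. ?k * (g x * cnj (g x)) * of_nat M)"
    by (simp add: zn_char_orthogonal if_distrib[of "\<lambda>t. _ * t"] cong: if_cong)
  also have "\<dots> = (\<Sum>x<M. g x * cnj (g x)) / of_nat M"
    using assms by (simp add: power2_eq_square sum_divide_distrib)
  also have "\<dots> = complex_of_real ((\<Sum>x<M. (cmod (g x))\<^sup>2) / real M)"
    by (simp only: of_real_divide of_real_sum complex_norm_square of_real_of_nat_eq)
  finally show ?thesis
    unfolding zn_norm2sq_eq by (simp only: of_real_eq_iff)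
qed

lemma zn_fourier_linear_combination:
  "zn_fourier M (\<lambda>x. u x + (\<Sum>a\<in>A. c a * v a x)) b
     = zn_fourier M u b + (\<Sum>a\<in>A. c a * zn_fourier M (v a) b)"
proof -
  have "(\<Sum>x<M. (\<Sum>a\<in>A. c a * v a x) * cnj (zn_char M b x))
      = (\<Sum>a\<in>A. c a * (\<Sum>x<M. v a x * cnj (zn_char M b x)))"
    by (simp add: sum_distrib_left sum_distrib_right mult.assoc sum.swap[of _ A])
  then show ?thesis
    unfolding zn_fourier_eq
    by (simp add: distrib_right sum.distrib add_divide_distrib sum_divide_distrib[of _ A])
qed

lemma zn_fourier_diff: "zn_fourier M (\<lambda>x. g x - h x) b = zn_fourier M g b - zn_fourier M h b"
  unfolding zn_fourier_eq by (simp add: left_diff_distrib sum_subtractf diff_divide_distrib)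

lemma zn_fourier_proj:
  assumes "\<Gamma> \<subseteq> {..<M}" "b < M"
  shows "zn_fourier M (zn_proj M g \<Gamma>) b = (if b \<in> \<Gamma> then zn_fourier M g b else 0)"
proof -
  have "finite \<Gamma>"
    using assms(1) finite_subset by blast
  have "zn_fourier M (zn_proj M g \<Gamma>) b = (\<Sum>x<M. zn_proj M g \<Gamma> x * cnj (zn_char M b x)) / of_nat M"
    by (rule zn_fourier_eq)
  also have "(\<Sum>x<M. zn_proj M g \<Gamma> x * cnj (zn_char M b x))
      = (\<Sum>x<M. \<Sum>a\<in>\<Gamma>. zn_fourier M g a * (zn_char M a x * cnj (zn_char M b x)))"
    unfolding zn_proj_def by (simp only: sum_distrib_right mult.assoc)
  also have "\<dots> = (\<Sum>a\<in>\<Gamma>. zn_fourier M g a * (\<Sum>x<M. zn_char M a x * cnj (zn_char M b x)))"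
    by (subst sum.swap) (simp only: sum_distrib_left)
  also have "\<dots> / of_nat M
      = (\<Sum>a\<in>\<Gamma>. zn_fourier M g a * ((\<Sum>x<M. zn_char M a x * cnj (zn_char M b x)) / of_nat M))"
    by (simp add: sum_divide_distrib[of _ \<Gamma>])
  also have "\<dots> = (\<Sum>a\<in>\<Gamma>. if a = b then zn_fourier M g b else 0)"
    using assms by (intro sum.cong refl) (auto simp: zn_char_orthogonal subset_eq)
  finally show ?thesis
    using \<open>finite \<Gamma>\<close> by (simp add: sum.delta')
qed

lemma zn_proj_error_eq:
  assumes "M > 0" "\<Gamma> \<subseteq> {..<M}"
  shows "zn_norm2sq M (\<lambda>x. g x - zn_proj M g \<Gamma> x)
    = (\<Sum>b\<in>{..<M} - \<Gamma>. (cmod (zn_fourier M g b))\<^sup>2)"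
proof -
  have "zn_norm2sq M (\<lambda>x. g x - zn_proj M g \<Gamma> x)
      = (\<Sum>b<M. if b \<in> \<Gamma> then 0 else (cmod (zn_fourier M g b))\<^sup>2)"
    unfolding zn_parseval[OF assms(1)] zn_fourier_diff
    by (intro sum.cong refl) (simp add: zn_fourier_proj[OF assms(2)])
  also have "\<dots> = (\<Sum>b\<in>{..<M} - \<Gamma>. (cmod (zn_fourier M g b))\<^sup>2)"
    by (rule sum.mono_neutral_cong_right) auto
  finally show ?thesis .
qed

lemma zn_fourier_sq_le_norm2sq:
  assumes "a < M"
  shows "(cmod (zn_fourier M g a))\<^sup>2 \<le> zn_norm2sq M g"
  using assms by (simp add: zn_parseval member_le_sum[where f = "\<lambda>b. (cmod (zn_fourier M g b))\<^sup>2"])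

section \<open>Fourier coefficients of truncated characters\<close>

lemma zn_fourier_tilde_char:
  assumes "N > 0" "M > 0"
  shows "zn_fourier M (zn_tilde N M (zn_char N a)) b
    = (\<Sum>x<min N M. cis (2 * pi * (real a / real N - real b / real M)) ^ x) / of_nat M"
proof -
  have "(\<Sum>x<M. zn_tilde N M (zn_char N a) x * cnj (zn_char M b x))
      = (\<Sum>x\<in>{..<M} \<inter> {..<min N M}. zn_char N a x * cnj (zn_char M b x))"
    unfolding zn_tilde_def sum.inter_restrict[OF finite_lessThan] by (intro sum.cong) auto
  also have "{..<M} \<inter> {..<min N M} = {..<min N M}"
    by auto
  finally show ?thesis
    unfolding zn_fourier_eq using assms by (simp add: zn_char_mult_cnj)
qed

lemma norm_geometric_sum_unimodular_le:
  fixes w :: complex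
  assumes "w \<noteq> 1" "cmod w = 1"
  shows "cmod (\<Sum>x<L. w ^ x) \<le> 2 / cmod (w - 1)"
proof -
  have "cmod (w ^ L - 1) \<le> cmod (w ^ L) + 1"
    using norm_triangle_ineq4[of "w ^ L" 1] by simp
  then have "cmod (w ^ L - 1) \<le> 2"
    using assms(2) by (simp add: norm_power)
  then show ?thesis
    unfolding geometric_sum[OF assms(1)] norm_divide by (intro divide_right_mono) auto
qed

lemma sin_ge_half:
  assumes "0 \<le> y" "y \<le> pi / 2"
  shows "y / 2 \<le> sin y"
proof -
  have "\<bar>sin y - y\<bar> \<le> y ^ 3 / 6"
    using Maclaurin_sin_bound[of y 3] assms by (simp add: sin_coeff_def numeral_eq_Suc fact_numeral)
  moreover have "y ^ 3 \<le> y * 3"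
  proof -
    have "y \<le> 1.6"
      using assms pi_approx by simp
    then have "y\<^sup>2 \<le> 1.6\<^sup>2"
      using assms by (intro power_mono) auto
    then have "y\<^sup>2 \<le> 3"
      by (simp add: power2_eq_square)
    then have "y * y\<^sup>2 \<le> y * 3"
      using assms by (intro mult_left_mono) auto
    then show ?thesis
      by (simp add: power3_eq_cube power2_eq_square)
  qed
  ultimately show ?thesis
    by linarith
qed

lemma norm_cis_minus_one_ge:
  assumes "\<bar>s\<bar> \<le> 1"
  shows "3 * min \<bar>s\<bar> (1 - \<bar>s\<bar>) \<le> cmod (cis (2 * pi * s) - 1)"
proof -
  define t where "t = \<bar>s\<bar>"
  have t: "0 \<le> t" "t \<le> 1"
    using assms unfolding t_def by auto
  have "cmod (cis (2 * pi * s) - 1) = 2 * \<bar>sin (pi * s)\<bar>"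
    using dist_exp_i_1[of "2 * pi * s"] by (simp add: cis_conv_exp)
  also have "\<bar>sin (pi * s)\<bar> = sin (pi * t)"
  proof -
    have "0 \<le> sin (pi * t)"
      using t by (intro sin_ge_zero) auto
    moreover have "\<bar>sin (pi * s)\<bar> = \<bar>sin (pi * t)\<bar>"
      unfolding t_def by (cases "s \<ge> 0") simp_all
    ultimately show ?thesis
      by simp
  qed
  finally have eq: "cmod (cis (2 * pi * s) - 1) = 2 * sin (pi * t)" .
  show ?thesis
  proof (cases "t \<le> 1 / 2")
    case True
    have "3 * min t (1 - t) \<le> 3 * t"
      by simp
    also have "\<dots> \<le> pi * t"
      using t pi_gt3 by (intro mult_right_mono) auto
    also have "\<dots> \<le> 2 * sin (pi * t)"
      using sin_ge_half[of "pi * t"] True t by simp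
    finally show ?thesis
      using eq unfolding t_def by simp
  next
    case False
    have "3 * min t (1 - t) \<le> 3 * (1 - t)"
      by (simp add: min_def)
    also have "\<dots> \<le> pi * (1 - t)"
      using t pi_gt3 by (intro mult_right_mono) auto
    also have "\<dots> \<le> 2 * sin (pi * (1 - t))"
      using sin_ge_half[of "pi * (1 - t)"] False t by simp
    also have "sin (pi * (1 - t)) = sin (pi * t)"
      using sin_pi_minus[of "pi * t"] by (simp add: right_diff_distrib)
    finally show ?thesis
      using eq unfolding t_def by simp
  qed
qed

lemma norm_sum_cis_power_le:
  assumes "0 < m" "m \<le> \<bar>s\<bar>" "\<bar>s\<bar> \<le> 1 - m"
  shows "cmod (\<Sum>x<L. cis (2 * pi * s) ^ x) \<le> 2 / (3 * m)"
proof -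
  have "3 * m \<le> cmod (cis (2 * pi * s) - 1)"
    using assms norm_cis_minus_one_ge[of s] by (auto simp: min_def split: if_splits)
  then have "cis (2 * pi * s) \<noteq> 1"
    using assms(1) by auto
  then have "cmod (\<Sum>x<L. cis (2 * pi * s) ^ x) \<le> 2 / cmod (cis (2 * pi * s) - 1)"
    by (intro norm_geometric_sum_unimodular_le) simp_all
  also have "\<dots> \<le> 2 / (3 * m)"
    using \<open>3 * m \<le> cmod (cis (2 * pi * s) - 1)\<close> assms(1) by (intro divide_left_mono mult_pos_pos) auto
  finally show ?thesis .
qed

lemma norm_mean_cis_power_sq_le:
  fixes j :: int
  assumes M: "M > 0" and \<delta>: "\<bar>\<delta>\<bar> \<le> 1/2" and j: "2 * \<bar>j\<bar> \<le> int M" "2 \<le> \<bar>j\<bar>"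
  shows "(cmod ((\<Sum>x<L. cis (2 * pi * ((\<delta> - of_int j) / real M)) ^ x) / of_nat M))\<^sup>2
    \<le> 1 / (2 * \<bar>of_int j\<bar> * (\<bar>of_int j\<bar> - 1))"
proof -
  define r where "r = \<bar>real_of_int j\<bar>"
  define s where "s = (\<delta> - of_int j) / real M"
  define m where "m = (r - 1/2) / real M"
  have r: "2 \<le> r" "2 * r \<le> real M"
    using j unfolding r_def by linarith+
  have dist_j: "r - 1/2 \<le> \<bar>\<delta> - of_int j\<bar>" "\<bar>\<delta> - of_int j\<bar> + (r - 1/2) \<le> real M"
    using \<delta> r unfolding r_def by linarith+
  have "\<bar>s\<bar> = \<bar>\<delta> - of_int j\<bar> / real M"
    unfolding s_def by simp
  then have "m \<le> \<bar>s\<bar>" "\<bar>s\<bar> \<le> 1 - m"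
    using dist_j M unfolding m_def by (simp_all add: divide_right_mono field_simps)
  moreover have "0 < m"
    using r M unfolding m_def by simp
  ultimately have "cmod (\<Sum>x<L. cis (2 * pi * s) ^ x) / real M \<le> 2 / (3 * m) / real M"
    using M by (intro divide_right_mono norm_sum_cis_power_le) auto
  also have "\<dots> = 2 / (3 * (r - 1/2))"
    using M unfolding m_def by simp
  finally have "(cmod ((\<Sum>x<L. cis (2 * pi * s) ^ x) / of_nat M))\<^sup>2 \<le> (2 / (3 * (r - 1/2)))\<^sup>2"
    by (intro power_mono) (auto simp: norm_divide)
  also have "\<dots> \<le> 1 / (2 * r * (r - 1))"
  proof -
    have "1 * r \<le> r * r"
      using r by (intro mult_right_mono) auto
    then have "8 * r * (r - 1) \<le> (3 * (r - 1/2))\<^sup>2"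
      by (simp add: power2_eq_square algebra_simps)
    then have "4 / (3 * (r - 1/2))\<^sup>2 \<le> 4 / (8 * r * (r - 1))"
      using r by (intro divide_left_mono mult_pos_pos) auto
    then show ?thesis
      by (simp add: power_divide)
  qed
  finally show ?thesis
    unfolding s_def r_def .
qed

lemma zn_fourier_tilde_char_sq_le:
  fixes j k :: int
  assumes N: "N > 0" and M: "M > 0"
    and jk: "int b - round (real M * real a / real N) = j + k * int M"
    and j: "2 * \<bar>j\<bar> \<le> int M" "2 \<le> \<bar>j\<bar>"
  shows "(cmod (zn_fourier M (zn_tilde N M (zn_char N a)) b))\<^sup>2
    \<le> 1 / (2 * \<bar>of_int j\<bar> * (\<bar>of_int j\<bar> - 1))"
proof -
  define \<rho> where "\<rho> = real M * real a / real N"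
  define \<delta> where "\<delta> = \<rho> - of_int (round \<rho>)"
  have \<delta>: "\<bar>\<delta>\<bar> \<le> 1/2"
    unfolding \<delta>_def using of_int_round_abs_le[of \<rho>] by linarith
  have "real a / real N - real b / real M = (\<delta> - of_int j) / real M - of_int k"
  proof -
    have "\<rho> - real b = \<delta> - of_int j - of_int k * real M"
      using arg_cong[OF jk, of real_of_int] unfolding \<delta>_def \<rho>_def by simp
    then have "(\<delta> - of_int j) / real M - of_int k = (\<rho> - real b) / real M"
      using M by (simp add: field_simps)
    also have "\<dots> = real a / real N - real b / real M"
      using M unfolding \<rho>_def by (simp add: diff_divide_distrib)
    finally show ?thesis ..
  qed
  moreover have "cis (2 * pi * (t - of_int k)) = cis (2 * pi * t)" for t
  proof -
    have "cis (2 * pi * of_int k) = 1"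
      by simp
    then show ?thesis
      by (simp add: right_diff_distrib flip: cis_divide)
  qed
  ultimately have "cis (2 * pi * (real a / real N - real b / real M))
      = cis (2 * pi * ((\<delta> - of_int j) / real M))"
    by simp
  then have "(cmod (zn_fourier M (zn_tilde N M (zn_char N a)) b))\<^sup>2
      = (cmod ((\<Sum>x<min N M. cis (2 * pi * ((\<delta> - of_int j) / real M)) ^ x) / of_nat M))\<^sup>2"
    by (simp add: zn_fourier_tilde_char[OF N M])
  also have "\<dots> \<le> 1 / (2 * \<bar>of_int j\<bar> * (\<bar>of_int j\<bar> - 1))"
    by (rule norm_mean_cis_power_sq_le[OF M \<delta> j])
  finally show ?thesis .
qed

lemma sum_inverse_mult_pred_eq:
  assumes "1 \<le> W"
  shows "(\<Sum>r\<in>{W<..W + p}. 1 / (real r * (real r - 1))) = 1 / real W - 1 / real (W + p)"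
proof (induction p)
  case 0
  then show ?case by simp
next
  case (Suc p)
  define q where "q = real (W + p)"
  have "q > 0"
    using assms unfolding q_def by simp
  have "{W<..W + Suc p} = insert (W + Suc p) {W<..W + p}"
    by auto
  then have "(\<Sum>r\<in>{W<..W + Suc p}. 1 / (real r * (real r - 1)))
      = 1 / ((q + 1) * q) + (1 / real W - 1 / q)"
    using Suc.IH unfolding q_def by simp
  also have "\<dots> = 1 / real W - 1 / (q + 1)"
  proof -
    have "1 / ((q + 1) * q) = 1 / q - 1 / (q + 1)"
      using \<open>q > 0\<close> by (simp add: field_simps)
    then show ?thesis
      by linarith
  qed
  finally show ?case
    unfolding q_def by simp
qed

lemma sum_inverse_mult_pred_le:
  assumes "1 \<le> W"
  shows "(\<Sum>r\<in>{W<..R}. 1 / (real r * (real r - 1))) \<le> 1 / real W"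
proof (cases "W \<le> R")
  case True
  then obtain p where "R = W + p"
    using le_Suc_ex by blast
  then show ?thesis
    using sum_inverse_mult_pred_eq[OF assms, of p] by simp
next
  case False
  then show ?thesis
    by simp
qed

lemma sum_le_by_integer_labels:
  fixes J :: "'a \<Rightarrow> int" and \<phi> :: "'a \<Rightarrow> real"
  assumes "finite B" "inj_on J B" "1 \<le> W"
    and range: "\<And>b. b \<in> B \<Longrightarrow> int W < \<bar>J b\<bar> \<and> \<bar>J b\<bar> \<le> int R"
    and bound: "\<And>b. b \<in> B \<Longrightarrow> \<phi> b \<le> 1 / (2 * \<bar>of_int (J b)\<bar> * (\<bar>of_int (J b)\<bar> - 1))"
  shows "(\<Sum>b\<in>B. \<phi> b) \<le> 1 / real W"
proof -
  define h :: "int \<Rightarrow> real" where "h j = 1 / (2 * \<bar>of_int j\<bar> * (\<bar>of_int j\<bar> - 1))" for j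
  define P where "P = int ` {W<..R}"
  define S where "S = P \<union> uminus ` P"
  have "J ` B \<subseteq> S"
  proof
    fix j assume "j \<in> J ` B"
    then have "int W < \<bar>j\<bar>" "\<bar>j\<bar> \<le> int R"
      using range by auto
    then have "nat \<bar>j\<bar> \<in> {W<..R}"
      by auto
    moreover have "j = int (nat \<bar>j\<bar>) \<or> j = - int (nat \<bar>j\<bar>)"
      by linarith
    ultimately show "j \<in> S"
      unfolding S_def P_def by (metis UnI1 UnI2 image_eqI)
  qed
  have h_nonneg: "0 \<le> h j" if "j \<in> S" for j
  proof -
    have "1 \<le> \<bar>of_int j\<bar> - (1::real)"
      using that \<open>1 \<le> W\<close> unfolding S_def P_def by auto
    then show ?thesis
      unfolding h_def by simp
  qed
  have "(\<Sum>b\<in>B. \<phi> b) \<le> (\<Sum>b\<in>B. h (J b))"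
    using bound unfolding h_def by (intro sum_mono) auto
  also have "\<dots> = (\<Sum>j\<in>J ` B. h j)"
    using sum.reindex[OF \<open>inj_on J B\<close>, of h] by simp
  also have "\<dots> \<le> (\<Sum>j\<in>S. h j)"
    using \<open>J ` B \<subseteq> S\<close> h_nonneg unfolding S_def P_def by (intro sum_mono2) auto
  also have "\<dots> = (\<Sum>j\<in>P. h j) + (\<Sum>j\<in>P. h (- j))"
    unfolding S_def using sum.reindex[of uminus P h]
    by (subst sum.union_disjoint) (auto simp: P_def inj_on_def)
  also have "\<dots> = (\<Sum>r\<in>{W<..R}. 1 / (real r * (real r - 1)))"
    unfolding P_def h_def sum.distrib[symmetric] by (subst sum.reindex) (auto simp: inj_on_def)
  also have "\<dots> \<le> 1 / real W"
    by (rule sum_inverse_mult_pred_le[OF \<open>1 \<le> W\<close>])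
  finally show ?thesis .
qed

text \<open>The representative of \<open>c\<close> modulo \<open>M\<close> of least absolute value.\<close>
definition centred_mod :: "int \<Rightarrow> nat \<Rightarrow> int" where
  "centred_mod c M = (c + int M div 2) mod int M - int M div 2"

lemma centred_mod_decomp: "c = centred_mod c M + ((c + int M div 2) div int M) * int M"
  unfolding centred_mod_def by (simp add: algebra_simps)

lemma centred_mod_abs_le:
  assumes "M > 0"
  shows "2 * \<bar>centred_mod c M\<bar> \<le> int M"
proof -
  have "2 * (int M div 2) \<le> int M" "int M \<le> 2 * (int M div 2) + 1"
    by presburger+
  then have "2 * \<bar>r - int M div 2\<bar> \<le> int M" if "0 \<le> r" "r < int M" for r
    using that by arith
  then show ?thesis
    unfolding centred_mod_def using assms by simp
qed

lemma inj_on_centred_mod: "inj_on (\<lambda>b. centred_mod (int b - c) M) {..<M}"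
proof (rule inj_onI)
  fix x y assume "x \<in> {..<M}" "y \<in> {..<M}" "centred_mod (int x - c) M = centred_mod (int y - c) M"
  then have "int M dvd int x - int y" "\<bar>int x - int y\<bar> < int M"
    unfolding centred_mod_def by (auto simp: mod_eq_dvd_iff)
  then show "x = y"
    using eq_of_dvd_diff_less[of "int M" "int x" "int y"] by simp
qed

lemma zn_fourier_tilde_char_tail_le:
  assumes N: "N > 0" and M: "M > 0" and W: "1 \<le> W"
  obtains \<Lambda> where "\<Lambda> \<subseteq> {..<M}" "card \<Lambda> \<le> 2 * W + 1"
    "(\<Sum>b\<in>{..<M} - \<Lambda>. (cmod (zn_fourier M (zn_tilde N M (zn_char N a)) b))\<^sup>2) \<le> 1 / real W"
proof -
  define J where "J b = centred_mod (int b - round (real M * real a / real N)) M" for b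
  \<comment> \<open>the cyclic offset of \<open>b\<close> from the frequency nearest to \<open>M a / N\<close>\<close>
  define \<Lambda> where "\<Lambda> = {b \<in> {..<M}. \<bar>J b\<bar> \<le> int W}"
  have J_inj: "inj_on J {..<M}"
    unfolding J_def by (rule inj_on_centred_mod)
  have "card \<Lambda> \<le> card {- int W..int W}"
    using J_inj unfolding \<Lambda>_def by (intro card_inj_on_le) (auto simp: inj_on_def)
  then have "card \<Lambda> \<le> 2 * W + 1"
    by simp
  moreover have "(\<Sum>b\<in>{..<M} - \<Lambda>. (cmod (zn_fourier M (zn_tilde N M (zn_char N a)) b))\<^sup>2)
      \<le> 1 / real W"
  proof (rule sum_le_by_integer_labels[where J = J and R = M])
    show "inj_on J ({..<M} - \<Lambda>)"
      using J_inj by (rule inj_on_subset) auto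
    fix b assume "b \<in> {..<M} - \<Lambda>"
    then have "int W < \<bar>J b\<bar>"
      unfolding \<Lambda>_def by auto
    moreover have J_le: "2 * \<bar>J b\<bar> \<le> int M"
      unfolding J_def using M by (rule centred_mod_abs_le)
    ultimately show "int W < \<bar>J b\<bar> \<and> \<bar>J b\<bar> \<le> int M"
      by linarith
    show "(cmod (zn_fourier M (zn_tilde N M (zn_char N a)) b))\<^sup>2
        \<le> 1 / (2 * \<bar>of_int (J b)\<bar> * (\<bar>of_int (J b)\<bar> - 1))"
      using \<open>int W < \<bar>J b\<bar>\<close> W unfolding J_def
      by (intro zn_fourier_tilde_char_sq_le[OF N M centred_mod_decomp J_le[unfolded J_def]]) linarith
  qed (use W in auto)
  moreover have "\<Lambda> \<subseteq> {..<M}"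
    unfolding \<Lambda>_def by blast
  ultimately show ?thesis
    using that by blast
qed

section \<open>Truncating a function with few large Fourier coefficients\<close>

lemma zn_tilde_decompose:
  "zn_tilde N M f = (\<lambda>x. zn_tilde N M (\<lambda>x. f x - zn_proj N f \<Gamma> x) x
     + (\<Sum>a\<in>\<Gamma>. zn_fourier N f a * zn_tilde N M (zn_char N a) x))"
  by (intro ext) (auto simp: zn_tilde_def zn_proj_def)

lemma zn_norm2sq_tilde_le:
  assumes "N > 0" "M > 0"
  shows "zn_norm2sq M (zn_tilde N M f) \<le> real N / real M * zn_norm2sq N f"
proof -
  have "(\<Sum>x<M. (cmod (zn_tilde N M f x))\<^sup>2) = (\<Sum>x<min N M. (cmod (f x))\<^sup>2)"
    unfolding zn_tilde_def by (rule sum.mono_neutral_cong_right) auto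
  also have "\<dots> \<le> (\<Sum>x<N. (cmod (f x))\<^sup>2)"
    by (rule sum_mono2) auto
  finally show ?thesis
    using assms unfolding zn_norm2sq_eq by (simp add: divide_right_mono)
qed

lemma zn_fourier_tilde_sq_le:
  assumes N: "N > 0" and \<Gamma>: "\<Gamma> \<subseteq> {..<N}"
  shows "(cmod (zn_fourier M (zn_tilde N M f) b))\<^sup>2
    \<le> 2 * (cmod (zn_fourier M (zn_tilde N M (\<lambda>x. f x - zn_proj N f \<Gamma> x)) b))\<^sup>2
      + 2 * (real (card \<Gamma>) * zn_norm2sq N f
          * (\<Sum>a\<in>\<Gamma>. (cmod (zn_fourier M (zn_tilde N M (zn_char N a)) b))\<^sup>2))"
proof -
  let ?u = "zn_fourier M (zn_tilde N M (\<lambda>x. f x - zn_proj N f \<Gamma> x)) b"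
  let ?U = "\<lambda>a. zn_fourier M (zn_tilde N M (zn_char N a)) b"
  have "zn_fourier M (zn_tilde N M f) b = ?u + (\<Sum>a\<in>\<Gamma>. zn_fourier N f a * ?U a)"
    by (subst zn_tilde_decompose[of _ _ _ \<Gamma>]) (rule zn_fourier_linear_combination)
  then have "(cmod (zn_fourier M (zn_tilde N M f) b))\<^sup>2
      \<le> 2 * (cmod ?u)\<^sup>2 + 2 * (cmod (\<Sum>a\<in>\<Gamma>. zn_fourier N f a * ?U a))\<^sup>2"
    by (simp only: norm_add_sq_le)
  also have "(cmod (\<Sum>a\<in>\<Gamma>. zn_fourier N f a * ?U a))\<^sup>2
      \<le> real (card \<Gamma>) * (\<Sum>a\<in>\<Gamma>. (cmod (zn_fourier N f a))\<^sup>2 * (cmod (?U a))\<^sup>2)"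
    using norm_sum_sq_le[of "\<lambda>a. zn_fourier N f a * ?U a" \<Gamma>] by (simp add: norm_mult power_mult_distrib)
  also have "\<dots> \<le> real (card \<Gamma>) * (\<Sum>a\<in>\<Gamma>. zn_norm2sq N f * (cmod (?U a))\<^sup>2)"
    using \<Gamma> by (intro mult_left_mono sum_mono mult_right_mono zn_fourier_sq_le_norm2sq) auto
  also have "\<dots> = real (card \<Gamma>) * zn_norm2sq N f * (\<Sum>a\<in>\<Gamma>. (cmod (?U a))\<^sup>2)"
    by (simp add: sum_distrib_left mult.assoc)
  finally show ?thesis
    by simp
qed

lemma zn_fourier_tilde_chars_tail_le:
  assumes N: "N > 0" and M: "M > 0" and W: "1 \<le> W" and "finite \<Gamma>"
  obtains \<Lambda> where "\<Lambda> \<subseteq> {..<M}" "card \<Lambda> \<le> card \<Gamma> * (2 * W + 1)"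
    "\<And>a. a \<in> \<Gamma> \<Longrightarrow>
      (\<Sum>b\<in>{..<M} - \<Lambda>. (cmod (zn_fourier M (zn_tilde N M (zn_char N a)) b))\<^sup>2) \<le> 1 / real W"
proof -
  let ?U = "\<lambda>a b. zn_fourier M (zn_tilde N M (zn_char N a)) b"
  have "\<forall>a. \<exists>\<Lambda>. \<Lambda> \<subseteq> {..<M} \<and> card \<Lambda> \<le> 2 * W + 1
      \<and> (\<Sum>b\<in>{..<M} - \<Lambda>. (cmod (?U a b))\<^sup>2) \<le> 1 / real W"
    using zn_fourier_tilde_char_tail_le[OF N M W] by blast
  then obtain \<Lambda>\<^sub>a where \<Lambda>\<^sub>a: "\<And>a. \<Lambda>\<^sub>a a \<subseteq> {..<M}" "\<And>a. card (\<Lambda>\<^sub>a a) \<le> 2 * W + 1"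
    "\<And>a. (\<Sum>b\<in>{..<M} - \<Lambda>\<^sub>a a. (cmod (?U a b))\<^sup>2) \<le> 1 / real W"
    unfolding choice_iff by blast
  define \<Lambda> where "\<Lambda> = (\<Union>a\<in>\<Gamma>. \<Lambda>\<^sub>a a)"
  have "\<Lambda> \<subseteq> {..<M}"
    unfolding \<Lambda>_def using \<Lambda>\<^sub>a(1) by blast
  moreover have "card \<Lambda> \<le> card \<Gamma> * (2 * W + 1)"
  proof -
    have "card \<Lambda> \<le> (\<Sum>a\<in>\<Gamma>. card (\<Lambda>\<^sub>a a))"
      unfolding \<Lambda>_def by (rule card_UN_le[OF \<open>finite \<Gamma>\<close>])
    also have "\<dots> \<le> (\<Sum>a\<in>\<Gamma>. 2 * W + 1)"
      by (intro sum_mono \<Lambda>\<^sub>a(2))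
    finally show ?thesis
      by simp
  qed
  moreover have "(\<Sum>b\<in>{..<M} - \<Lambda>. (cmod (?U a b))\<^sup>2) \<le> 1 / real W" if "a \<in> \<Gamma>" for a
  proof -
    have "(\<Sum>b\<in>{..<M} - \<Lambda>. (cmod (?U a b))\<^sup>2) \<le> (\<Sum>b\<in>{..<M} - \<Lambda>\<^sub>a a. (cmod (?U a b))\<^sup>2)"
      using that unfolding \<Lambda>_def by (intro sum_mono2) auto
    then show ?thesis
      using \<Lambda>\<^sub>a(3)[of a] by linarith
  qed
  ultimately show ?thesis
    using that by blast
qed

lemma zn_proj_error_tilde_le:
  assumes N: "N > 0" and NM: "real N \<le> 2 * real M" and \<Gamma>: "\<Gamma> \<subseteq> {..<N}" and W: "1 \<le> W"
  obtains \<Lambda> where "\<Lambda> \<subseteq> {..<M}" "card \<Lambda> \<le> card \<Gamma> * (2 * W + 1)"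
    "zn_norm2sq M (\<lambda>x. zn_tilde N M f x - zn_proj M (zn_tilde N M f) \<Lambda> x)
      \<le> 2 * (2 * zn_norm2sq N (\<lambda>x. f x - zn_proj N f \<Gamma> x))
        + 2 * (real (card \<Gamma>) * zn_norm2sq N f * (real (card \<Gamma>) / real W))"
proof -
  let ?U = "\<lambda>a b. zn_fourier M (zn_tilde N M (zn_char N a)) b"
  let ?u = "zn_tilde N M (\<lambda>x. f x - zn_proj N f \<Gamma> x)"
  have M: "M > 0"
    using N NM by simp
  have "finite \<Gamma>"
    using \<Gamma> finite_subset by blast
  then obtain \<Lambda> where \<Lambda>: "\<Lambda> \<subseteq> {..<M}" "card \<Lambda> \<le> card \<Gamma> * (2 * W + 1)"
    and tail: "\<And>a. a \<in> \<Gamma> \<Longrightarrow> (\<Sum>b\<in>{..<M} - \<Lambda>. (cmod (?U a b))\<^sup>2) \<le> 1 / real W"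
    using zn_fourier_tilde_chars_tail_le[OF N M W] by blast
  let ?B = "{..<M} - \<Lambda>"
  have "zn_norm2sq M (\<lambda>x. zn_tilde N M f x - zn_proj M (zn_tilde N M f) \<Lambda> x)
      = (\<Sum>b\<in>?B. (cmod (zn_fourier M (zn_tilde N M f) b))\<^sup>2)"
    by (rule zn_proj_error_eq[OF M \<Lambda>(1)])
  also have "\<dots> \<le> (\<Sum>b\<in>?B. 2 * (cmod (zn_fourier M ?u b))\<^sup>2
      + 2 * (real (card \<Gamma>) * zn_norm2sq N f * (\<Sum>a\<in>\<Gamma>. (cmod (?U a b))\<^sup>2)))"
    by (intro sum_mono zn_fourier_tilde_sq_le[OF N \<Gamma>])
  also have "\<dots> = 2 * (\<Sum>b\<in>?B. (cmod (zn_fourier M ?u b))\<^sup>2)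
      + 2 * (real (card \<Gamma>) * zn_norm2sq N f * (\<Sum>a\<in>\<Gamma>. \<Sum>b\<in>?B. (cmod (?U a b))\<^sup>2))"
    by (simp add: sum.distrib sum_distrib_left sum.swap[of _ ?B])
  also have "(\<Sum>b\<in>?B. (cmod (zn_fourier M ?u b))\<^sup>2) \<le> zn_norm2sq M ?u"
    unfolding zn_parseval[OF M] by (rule sum_mono2) auto
  also have "\<dots> \<le> real N / real M * zn_norm2sq N (\<lambda>x. f x - zn_proj N f \<Gamma> x)"
    by (rule zn_norm2sq_tilde_le[OF N M])
  also have "\<dots> \<le> 2 * zn_norm2sq N (\<lambda>x. f x - zn_proj N f \<Gamma> x)"
    using NM M by (intro mult_right_mono zn_norm2sq_nonneg) (simp add: divide_simps)
  also have "(\<Sum>a\<in>\<Gamma>. \<Sum>b\<in>?B. (cmod (?U a b))\<^sup>2) \<le> real (card \<Gamma>) / real W"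
    using sum_mono[of \<Gamma> _ "\<lambda>_. 1 / real W", OF tail] by simp
  finally show ?thesis
    using that \<Lambda> by (simp add: mult_left_mono zn_norm2sq_nonneg)
qed

lemma zn_proj_error_tilde_lt:
  assumes N: "N > 0" and NM: "real N \<le> 2 * real M"
    and \<Gamma>: "\<Gamma> \<subseteq> {..<N}" and \<epsilon>: "\<epsilon> > 0"
    and err: "zn_norm2sq N (\<lambda>x. f x - zn_proj N f \<Gamma> x) < \<epsilon> / 8"
  obtains \<Lambda> where "\<Lambda> \<subseteq> {..<M}"
    "real (card \<Lambda>) \<le> 8 * real (card \<Gamma>) ^ 3 * zn_norm2sq N f * (1 / \<epsilon>) + 5 * real (card \<Gamma>)"
    "zn_norm2sq M (\<lambda>x. zn_tilde N M f x - zn_proj M (zn_tilde N M f) \<Lambda> x) < \<epsilon>"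
proof -
  define G where "G = real (card \<Gamma>)"
  define q where "q = zn_norm2sq N f"
  \<comment> \<open>chosen so that the tails of the truncated characters contribute at most \<open>\<epsilon> / 2\<close>\<close>
  define t where "t = 4 * G\<^sup>2 * q / \<epsilon>"
  define W where "W = nat \<lceil>t\<rceil> + 1"
  have "0 \<le> G" "0 \<le> q"
    unfolding G_def q_def by (simp_all add: zn_norm2sq_nonneg)
  then have "0 \<le> t"
    unfolding t_def using \<epsilon> by simp
  have W: "1 \<le> W" "t \<le> real W" "real W \<le> t + 2"
    unfolding W_def using \<open>0 \<le> t\<close> by linarith+
  obtain \<Lambda> where \<Lambda>: "\<Lambda> \<subseteq> {..<M}" "card \<Lambda> \<le> card \<Gamma> * (2 * W + 1)"
    and bound: "zn_norm2sq M (\<lambda>x. zn_tilde N M f x - zn_proj M (zn_tilde N M f) \<Lambda> x)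
      \<le> 2 * (2 * zn_norm2sq N (\<lambda>x. f x - zn_proj N f \<Gamma> x)) + 2 * (G * q * (G / real W))"
    by (rule zn_proj_error_tilde_le[OF N NM \<Gamma> W(1), where f = f, folded G_def q_def])
  have "real (card \<Lambda>) \<le> real (card \<Gamma> * (2 * W + 1))"
    using \<Lambda>(2) by (simp only: of_nat_le_iff)
  also have "\<dots> = G * (2 * real W + 1)"
    unfolding G_def by (simp add: algebra_simps)
  also have "\<dots> \<le> G * (2 * t + 5)"
    using W \<open>0 \<le> G\<close> by (intro mult_left_mono) auto
  also have "\<dots> = 8 * G ^ 3 * q * (1 / \<epsilon>) + 5 * G"
    unfolding t_def by (simp add: algebra_simps power2_eq_square power3_eq_cube)
  finally have "real (card \<Lambda>) \<le> 8 * G ^ 3 * q * (1 / \<epsilon>) + 5 * G" .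
  moreover have "2 * (G * q * (G / real W)) \<le> \<epsilon> / 2"
  proof -
    have "4 * G\<^sup>2 * q \<le> \<epsilon> * real W"
      using W(2) \<epsilon> unfolding t_def by (simp add: divide_le_eq mult.commute)
    then show ?thesis
      using W(1) by (simp add: field_simps power2_eq_square)
  qed
  ultimately show ?thesis
    using that \<Lambda>(1) bound err unfolding G_def q_def by fastforce
qed

section \<open>Polynomial bounds\<close>

lemma bipoly_eval_binomial:
  "bipoly_eval D (\<lambda>i j. K * real (D choose i) * real (D choose j)) x y = K * (1 + x) ^ D * (1 + y) ^ D"
proof -
  have "K * (1 + x) ^ D * (1 + y) ^ D
      = K * ((\<Sum>i\<le>D. real (D choose i) * x ^ i) * (\<Sum>j\<le>D. real (D choose j) * y ^ j))"
    using binomial_ring[of x 1 D] binomial_ring[of y 1 D] by (simp add: add.commute)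
  also have "\<dots> = (\<Sum>i\<le>D. \<Sum>j\<le>D. K * ((real (D choose i) * x ^ i) * (real (D choose j) * y ^ j)))"
    unfolding sum_product by (simp only: sum_distrib_left)
  finally show ?thesis
    unfolding bipoly_eval_def by (simp add: mult_ac)
qed

lemma power_le_one_plus_power:
  fixes x :: real
  assumes "0 \<le> x" "i \<le> d"
  shows "x ^ i \<le> (1 + x) ^ d"
proof -
  have "x ^ i \<le> (1 + x) ^ i"
    using assms by (intro power_mono) auto
  also have "\<dots> \<le> (1 + x) ^ d"
    using assms by (intro power_increasing) auto
  finally show ?thesis .
qed

lemma bipoly_eval_le:
  assumes "0 \<le> x" "0 \<le> y"
  shows "bipoly_eval d c x y \<le> (\<Sum>i\<le>d. \<Sum>j\<le>d. \<bar>c i j\<bar>) * (1 + x) ^ d * (1 + y) ^ d"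
proof -
  have "c i j * x ^ i * y ^ j \<le> \<bar>c i j\<bar> * ((1 + x) ^ d * (1 + y) ^ d)" if "i \<le> d" "j \<le> d" for i j
  proof -
    have "c i j * (x ^ i * y ^ j) \<le> \<bar>c i j\<bar> * (x ^ i * y ^ j)"
      using assms by (intro mult_right_mono) auto
    also have "\<dots> \<le> \<bar>c i j\<bar> * ((1 + x) ^ d * (1 + y) ^ d)"
      using assms that by (intro mult_left_mono mult_mono power_le_one_plus_power) auto
    finally show ?thesis
      by (simp add: mult.assoc)
  qed
  then have "bipoly_eval d c x y \<le> (\<Sum>i\<le>d. \<Sum>j\<le>d. \<bar>c i j\<bar> * ((1 + x) ^ d * (1 + y) ^ d))"
    unfolding bipoly_eval_def by (intro sum_mono) auto
  then show ?thesis
    by (simp add: sum_distrib_right mult.assoc)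
qed

lemma poly_le_sum_abs_coeff:
  fixes Q :: "real poly"
  assumes "0 \<le> x"
  shows "poly Q x \<le> (\<Sum>i\<le>degree Q. \<bar>coeff Q i\<bar>) * (1 + x) ^ degree Q"
proof -
  have "poly Q x \<le> (\<Sum>i\<le>degree Q. \<bar>coeff Q i\<bar> * (1 + x) ^ degree Q)"
    unfolding poly_altdef
  proof (rule sum_mono)
    fix i assume "i \<in> {..degree Q}"
    then have "coeff Q i * x ^ i \<le> \<bar>coeff Q i\<bar> * x ^ i"
      using assms by (intro mult_right_mono) auto
    also have "\<dots> \<le> \<bar>coeff Q i\<bar> * (1 + x) ^ degree Q"
      using assms \<open>i \<in> {..degree Q}\<close> by (intro mult_left_mono power_le_one_plus_power) auto
    finally show "coeff Q i * x ^ i \<le> \<bar>coeff Q i\<bar> * (1 + x) ^ degree Q" .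
  qed
  then show ?thesis
    by (simp add: sum_distrib_right)
qed

lemma concentrated_iff_power_bound:
  assumes "\<And>k. n k > 0"
  shows "concentrated n f \<longleftrightarrow> (\<exists>K\<ge>0. \<exists>D. \<forall>k. \<forall>\<epsilon>>0. \<exists>\<Gamma>\<subseteq>{..<n k}.
      real (card \<Gamma>) \<le> K * (1 + ln (real (n k))) ^ D * (1 + 1 / \<epsilon>) ^ D \<and>
      zn_norm2sq (n k) (\<lambda>x. f k x - zn_proj (n k) (f k) \<Gamma> x) < \<epsilon>)"
proof
  assume "concentrated n f"
  then obtain d c where conc: "\<forall>k. \<forall>\<epsilon>>0. \<exists>\<Gamma>. \<Gamma> \<subseteq> {..<n k} \<and>
      real (card \<Gamma>) \<le> bipoly_eval d c (ln (real (n k))) (1 / \<epsilon>) \<and>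
      zn_norm2sq (n k) (\<lambda>x. f k x - zn_proj (n k) (f k) \<Gamma> x) < \<epsilon>"
    unfolding concentrated_def by blast
  have "bipoly_eval d c (ln (real (n k))) (1 / \<epsilon>)
      \<le> (\<Sum>i\<le>d. \<Sum>j\<le>d. \<bar>c i j\<bar>) * (1 + ln (real (n k))) ^ d * (1 + 1 / \<epsilon>) ^ d"
    if "\<epsilon> > 0" for k \<epsilon>
    using assms[of k] that by (intro bipoly_eval_le) auto
  moreover have "0 \<le> (\<Sum>i\<le>d. \<Sum>j\<le>d. \<bar>c i j\<bar>)"
    by (intro sum_nonneg) auto
  ultimately show "\<exists>K\<ge>0. \<exists>D. \<forall>k. \<forall>\<epsilon>>0. \<exists>\<Gamma>\<subseteq>{..<n k}.
      real (card \<Gamma>) \<le> K * (1 + ln (real (n k))) ^ D * (1 + 1 / \<epsilon>) ^ D \<and>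
      zn_norm2sq (n k) (\<lambda>x. f k x - zn_proj (n k) (f k) \<Gamma> x) < \<epsilon>"
    using conc by (meson order_trans)
next
  assume "\<exists>K\<ge>0. \<exists>D. \<forall>k. \<forall>\<epsilon>>0. \<exists>\<Gamma>\<subseteq>{..<n k}.
      real (card \<Gamma>) \<le> K * (1 + ln (real (n k))) ^ D * (1 + 1 / \<epsilon>) ^ D \<and>
      zn_norm2sq (n k) (\<lambda>x. f k x - zn_proj (n k) (f k) \<Gamma> x) < \<epsilon>"
  then show "concentrated n f"
    unfolding concentrated_def bipoly_eval_binomial[symmetric] by blast
qed

lemma cubic_le_power_bound:
  fixes G q z X Y :: real
  assumes G: "0 \<le> G" "G \<le> K * X ^ D * Y ^ D" and q: "0 \<le> q" "q \<le> C * X ^ e"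
    and z: "0 \<le> z" "z \<le> Y" and XY: "1 \<le> X" "1 \<le> Y"
  shows "8 * G ^ 3 * q * z + 5 * G \<le> (8 * K ^ 3 * C + 5 * K) * X ^ (3 * D + e + 1) * Y ^ (3 * D + e + 1)"
proof -
  let ?E = "3 * D + e + 1"
  have "0 \<le> K * (X ^ D * Y ^ D)" "0 < X ^ D * Y ^ D" "0 \<le> C * X ^ e" "0 < X ^ e"
    using G q XY by (simp_all only: mult.assoc[symmetric]) auto
  then have "0 \<le> K" "0 \<le> C"
    by (simp_all add: zero_le_mult_iff)
  have "G ^ 3 * q * z \<le> (K * X ^ D * Y ^ D) ^ 3 * (C * X ^ e) * Y"
    using G q z by (intro mult_mono power_mono) auto
  also have "\<dots> = K ^ 3 * C * (X ^ (3 * D + e) * Y ^ (3 * D + 1))"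
    by (simp add: power_mult_distrib power_add power_mult algebra_simps)
  also have "\<dots> \<le> K ^ 3 * C * (X ^ ?E * Y ^ ?E)"
    using \<open>0 \<le> K\<close> \<open>0 \<le> C\<close> XY by (intro mult_left_mono mult_mono power_increasing) auto
  finally have cubic: "G ^ 3 * q * z \<le> K ^ 3 * C * (X ^ ?E * Y ^ ?E)" .
  have "G \<le> K * (X ^ D * Y ^ D)"
    using G by (simp add: mult.assoc)
  also have "\<dots> \<le> K * (X ^ ?E * Y ^ ?E)"
    using \<open>0 \<le> K\<close> XY by (intro mult_left_mono mult_mono power_increasing) auto
  finally have linear: "G \<le> K * (X ^ ?E * Y ^ ?E)" .
  show ?thesis
    using cubic linear by (simp add: algebra_simps)
qed

lemma one_add_ln_le_double:
  assumes "0 < n" "real n \<le> 2 * real m"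
  shows "1 + ln (real n) \<le> 2 * (1 + ln (real m))"
proof -
  have "0 < m"
    using assms by simp
  have "ln (real n) \<le> ln (2 * real m)"
    using assms by simp
  also have "\<dots> = ln 2 + ln (real m)"
    using \<open>0 < m\<close> by (simp add: ln_mult)
  finally have "ln (real n) \<le> ln 2 + ln (real m)" .
  moreover have "0 \<le> ln (real m)"
    using \<open>0 < m\<close> by simp
  ultimately show ?thesis
    using ln_2_less_1 by argo
qed

lemma zn_tilde_proj_power_bound:
  assumes N: "N > 0" and NM: "real N \<le> 2 * real M" and \<epsilon>: "\<epsilon> > 0" and "0 \<le> K" "0 \<le> C"
    and \<Gamma>: "\<Gamma> \<subseteq> {..<N}"
    and card\<Gamma>: "real (card \<Gamma>) \<le> K * (1 + ln (real N)) ^ D * (1 + 1 / (\<epsilon> / 8)) ^ D"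
    and err: "zn_norm2sq N (\<lambda>x. f x - zn_proj N f \<Gamma> x) < \<epsilon> / 8"
    and norm: "zn_norm2sq N f \<le> C * (1 + ln (real N)) ^ e"
  shows "\<exists>\<Lambda>\<subseteq>{..<M}. real (card \<Lambda>)
      \<le> (8 * (16 ^ D * K) ^ 3 * (2 ^ e * C) + 5 * (16 ^ D * K))
        * (1 + ln (real M)) ^ (3 * D + e + 1) * (1 + 1 / \<epsilon>) ^ (3 * D + e + 1)
      \<and> zn_norm2sq M (\<lambda>x. zn_tilde N M f x - zn_proj M (zn_tilde N M f) \<Lambda> x) < \<epsilon>"
proof -
  have M: "M > 0"
    using N NM by simp
  define X where "X = 1 + ln (real M)"
  define Y where "Y = 1 + 1 / \<epsilon>"
  have lnN: "0 \<le> ln (real N)" "1 + ln (real N) \<le> 2 * X"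
    using N one_add_ln_le_double[OF N NM] unfolding X_def by simp_all
  have XY: "1 \<le> X" "1 \<le> Y" "0 \<le> 1 / \<epsilon>" "1 / \<epsilon> \<le> Y"
    using M \<epsilon> unfolding X_def Y_def by simp_all
  obtain \<Lambda> where "\<Lambda> \<subseteq> {..<M}"
    and card\<Lambda>: "real (card \<Lambda>) \<le> 8 * real (card \<Gamma>) ^ 3 * zn_norm2sq N f * (1 / \<epsilon>) + 5 * real (card \<Gamma>)"
    and "zn_norm2sq M (\<lambda>x. zn_tilde N M f x - zn_proj M (zn_tilde N M f) \<Lambda> x) < \<epsilon>"
    by (rule zn_proj_error_tilde_lt[OF N NM \<Gamma> \<epsilon> err])
  have G: "real (card \<Gamma>) \<le> 16 ^ D * K * X ^ D * Y ^ D"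
  proof -
    note card\<Gamma>
    also have "K * (1 + ln (real N)) ^ D * (1 + 1 / (\<epsilon> / 8)) ^ D \<le> K * (2 * X) ^ D * (8 * Y) ^ D"
      using lnN \<open>0 \<le> K\<close> \<epsilon> unfolding Y_def by (intro mult_mono power_mono) auto
    also have "\<dots> = K * (2 * X * (8 * Y)) ^ D"
      by (simp only: mult.assoc power_mult_distrib)
    also have "\<dots> = 16 ^ D * K * X ^ D * Y ^ D"
      by (simp add: power_mult_distrib mult_ac)
    finally show ?thesis .
  qed
  have q: "zn_norm2sq N f \<le> 2 ^ e * C * X ^ e"
  proof -
    note norm
    also have "C * (1 + ln (real N)) ^ e \<le> C * (2 * X) ^ e"
      using lnN \<open>0 \<le> C\<close> by (intro mult_left_mono power_mono) auto
    finally show ?thesis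
      by (simp add: power_mult_distrib mult_ac)
  qed
  have "real (card \<Lambda>) \<le> (8 * (16 ^ D * K) ^ 3 * (2 ^ e * C) + 5 * (16 ^ D * K))
      * X ^ (3 * D + e + 1) * Y ^ (3 * D + e + 1)"
    using card\<Lambda> cubic_le_power_bound[OF _ G zn_norm2sq_nonneg q XY(3,4,1,2)] by simp
  then show ?thesis
    using \<open>\<Lambda> \<subseteq> {..<M}\<close> \<open>zn_norm2sq M _ < \<epsilon>\<close> unfolding X_def Y_def by blast
qed

theorem theorem1p5:
  fixes n m :: "nat \<Rightarrow> nat" and Q :: "real poly" and f :: "nat \<Rightarrow> nat \<Rightarrow> complex"
  assumes "\<And>k. n k > 0" and "\<And>k. m k > 0"
    and "\<And>k. real (m k) \<ge> real (n k) / 2"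
    and "concentrated n f"
    and "\<And>k. zn_norm2sq (n k) (f k) \<le> poly Q (ln (real (n k)))"
  shows "concentrated m (\<lambda>k. zn_tilde (n k) (m k) (f k))"
proof -
  obtain K D where "0 \<le> K" and conc: "\<forall>k. \<forall>\<epsilon>>0. \<exists>\<Gamma>\<subseteq>{..<n k}.
      real (card \<Gamma>) \<le> K * (1 + ln (real (n k))) ^ D * (1 + 1 / \<epsilon>) ^ D \<and>
      zn_norm2sq (n k) (\<lambda>x. f k x - zn_proj (n k) (f k) \<Gamma> x) < \<epsilon>"
    using assms(4) unfolding concentrated_iff_power_bound[OF assms(1)] by blast
  define C where "C = (\<Sum>i\<le>degree Q. \<bar>coeff Q i\<bar>)"
  have "0 \<le> C"
    unfolding C_def by (intro sum_nonneg) auto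
  have norm: "zn_norm2sq (n k) (f k) \<le> C * (1 + ln (real (n k))) ^ degree Q" for k
    using assms(5)[of k] poly_le_sum_abs_coeff[of "ln (real (n k))" Q] assms(1)[of k]
    unfolding C_def by simp
  have "\<exists>\<Lambda>\<subseteq>{..<m k}. real (card \<Lambda>)
      \<le> (8 * (16 ^ D * K) ^ 3 * (2 ^ degree Q * C) + 5 * (16 ^ D * K))
        * (1 + ln (real (m k))) ^ (3 * D + degree Q + 1) * (1 + 1 / \<epsilon>) ^ (3 * D + degree Q + 1)
      \<and> zn_norm2sq (m k) (\<lambda>x. zn_tilde (n k) (m k) (f k) x
        - zn_proj (m k) (zn_tilde (n k) (m k) (f k)) \<Lambda> x) < \<epsilon>"
    if "\<epsilon> > 0" for k \<epsilon>
  proof -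
    obtain \<Gamma> where "\<Gamma> \<subseteq> {..<n k}"
      "real (card \<Gamma>) \<le> K * (1 + ln (real (n k))) ^ D * (1 + 1 / (\<epsilon> / 8)) ^ D"
      "zn_norm2sq (n k) (\<lambda>x. f k x - zn_proj (n k) (f k) \<Gamma> x) < \<epsilon> / 8"
      using conc \<open>\<epsilon> > 0\<close> by (metis zero_less_divide_iff zero_less_numeral)
    then show ?thesis
      using assms(3)[of k] by (intro zn_tilde_proj_power_bound[OF assms(1) _ that \<open>0 \<le> K\<close> \<open>0 \<le> C\<close> _ _ _ norm]) auto
  qed
  moreover have "0 \<le> 8 * (16 ^ D * K) ^ 3 * (2 ^ degree Q * C) + 5 * (16 ^ D * K)"
    using \<open>0 \<le> K\<close> \<open>0 \<le> C\<close> by simp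
  ultimately show ?thesis
    unfolding concentrated_iff_power_bound[OF assms(2)] by blast
qed

end
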